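(* For any Hermitian matrices $P$ and $Q$ of the same size, $$|\mathrm{Tr}(\zeta(P+Q)-\zeta(P))|\le2\big(\|P\|_2\|Q\|_2+\|Q\|_2^2\big).$$
   Context: $\zeta:\mathbb{R}\to\mathbb{R}$ is $\zeta(x)=x^2$ for $x\le0$ and $\zeta(x)=0$ otherwise, applied to Hermitian matrices via the spectral decomposition. $\|\cdot\|_2$ is the (unnormalized) Schatten 2-norm (Frobenius norm). *)

theory Defs
  imports "HOL-Analysis.Analysis"
begin

definition cmat_adj :: "complex^'n^'n \<Rightarrow> complex^'n^'n" where
  "cmat_adj A = (\<chi> i j. cnj (A $ j $ i))"

definition hermitian :: "complex^'n^'n \<Rightarrow> bool" where
  "hermitian A \<longleftrightarrow> cmat_adj A = A"

definition unitary :: "complex^'n^'n \<Rightarrow> bool" where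
  "unitary U \<longleftrightarrow> cmat_adj U ** U = mat 1"

definition rdiag :: "real^'n \<Rightarrow> complex^'n^'n" where
  "rdiag d = (\<chi> i j. if i = j then complex_of_real (d $ i) else 0)"

definition matfun :: "(real \<Rightarrow> real) \<Rightarrow> complex^'n^'n \<Rightarrow> complex^'n^'n" where
  "matfun f A = (SOME B. \<exists>U d. unitary U \<and> A = U ** rdiag d ** cmat_adj U \<and>
                          B = U ** rdiag (\<chi> i. f (d $ i)) ** cmat_adj U)"

definition zeta :: "real \<Rightarrow> real" where
  "zeta x = (if x \<le> 0 then x ^ 2 else 0)"

text \<open>Unnormalized Schatten 2-norm (Frobenius norm).\<close>
definition frob :: "complex^'n^'n \<Rightarrow> real" where
  "frob A = sqrt (\<Sum>i\<in>UNIV. \<Sum>j\<in>UNIV. (cmod (A $ i $ j))^2)"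

end

theory Submission
  imports Defs
begin

text \<open>For Hermitian \<open>A\<close>, \<open>Tr \<zeta>(A)\<close> is the squared Frobenius distance from \<open>A\<close> to the cone of
  positive semidefinite matrices: the positive part of \<open>A\<close> is at distance \<open>sqrt (Tr \<zeta>(A))\<close>, and in
  an orthonormal eigenbasis of \<open>A\<close> every positive semidefinite matrix has a nonnegative diagonal,
  so it is at least that far from \<open>A\<close>. The distance to a set is 1-Lipschitz and \<open>0\<close> lies in the
  cone, so the distances \<open>a\<close> of \<open>P\<close> and \<open>b\<close> of \<open>P + Q\<close> satisfy \<open>|b - a| \<le> \<parallel>Q\<parallel>\<^sub>2\<close> and
  \<open>a \<le> \<parallel>P\<parallel>\<^sub>2\<close>, whence \<open>|b\<^sup>2 - a\<^sup>2| = |b - a| (a + b) \<le> \<parallel>Q\<parallel>\<^sub>2 (2 \<parallel>P\<parallel>\<^sub>2 + \<parallel>Q\<parallel>\<^sub>2)\<close>.\<close>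

section \<open>Eigenvectors of self-adjoint maps\<close>

lemma quadratic_nonneg_imp_linear_coeff_zero:
  fixes a b :: real
  assumes nonneg: "\<And>t. 0 \<le> a * t + b * t^2"
  shows "a = 0"
proof (rule ccontr)
  assume "a \<noteq> 0"
  define c where "c = \<bar>b\<bar> + 1"
  have "c > 0" by (simp add: c_def)
  have "0 \<le> a * (- a / c) + b * (- a / c)^2" by (rule nonneg)
  also have "\<dots> \<le> a * (- a / c) + \<bar>b\<bar> * (- a / c)^2"
    by (intro add_left_mono mult_right_mono) auto
  also have "\<dots> = a^2 * (\<bar>b\<bar> - c) / c^2"
    using \<open>c > 0\<close> by (simp add: field_simps power2_eq_square)
  also have "\<dots> = - (a^2 / c^2)" by (simp add: c_def)
  also have "\<dots> < 0" using \<open>a \<noteq> 0\<close> \<open>c > 0\<close> by simp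
  finally show False by simp
qed

lemma rayleigh_quotient_attains_max_on_subspace:
  fixes T :: "'a::euclidean_space \<Rightarrow> 'a"
  assumes "linear T" "subspace W" "W \<noteq> {0}"
  obtains x where "x \<in> W" "norm x = 1"
    "\<And>y. y \<in> W \<Longrightarrow> inner y (T y) \<le> inner x (T x) * (norm y)^2"
proof -
  define f where "f x = inner x (T x)" for x
  have f_scale: "f (c *\<^sub>R y) = c^2 * f y" for c y
    using linear_cmul[OF assms(1)] by (simp add: f_def power2_eq_square)
  have unit_in_W: "(1 / norm y) *\<^sub>R y \<in> W \<inter> sphere 0 1" if "y \<in> W" "y \<noteq> 0" for y
    using that assms(2) by (simp add: subspace_scale)
  have "compact (W \<inter> sphere 0 1)"
    using assms(2) by (intro closed_Int_compact closed_subspace compact_sphere)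
  moreover have "W \<inter> sphere 0 1 \<noteq> {}"
    using assms(2,3) unit_in_W subspace_0 by blast
  moreover have "continuous_on (W \<inter> sphere 0 1) T"
    using assms(1) linear_conv_bounded_linear linear_continuous_on by blast
  then have "continuous_on (W \<inter> sphere 0 1) f"
    unfolding f_def by (intro continuous_intros)
  ultimately obtain x where x: "x \<in> W \<inter> sphere 0 1" and max: "\<And>y. y \<in> W \<inter> sphere 0 1 \<Longrightarrow> f y \<le> f x"
    using continuous_attains_sup by metis
  have bound: "f y \<le> f x * (norm y)^2" if "y \<in> W" for y
  proof (cases "y = 0")
    case True
    then show ?thesis using linear_0[OF assms(1)] by (simp add: f_def)
  next
    case False
    then have "f y / (norm y)^2 \<le> f x"
      using max[OF unit_in_W[OF that]] by (simp add: f_scale power_divide)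
    then show ?thesis using False by (simp add: divide_le_eq)
  qed
  show ?thesis by (rule that[of x]) (use x bound in \<open>auto simp: f_def\<close>)
qed

lemma selfadjoint_rayleigh_maximizer_is_eigenvector:
  fixes T :: "'a::euclidean_space \<Rightarrow> 'a"
  assumes T: "linear T" and selfadjoint: "\<And>x y. inner x (T y) = inner (T x) y"
    and W: "subspace W" "T ` W \<subseteq> W"
    and x: "x \<in> W" "norm x = 1"
    and max: "\<And>y. y \<in> W \<Longrightarrow> inner y (T y) \<le> inner x (T x) * (norm y)^2"
  shows "T x = inner x (T x) *\<^sub>R x"
proof -
  define \<mu> where "\<mu> = inner x (T x)"
  define r where "r = T x - \<mu> *\<^sub>R x"
  have "r \<in> W" using W x by (auto simp: r_def intro: subspace_diff subspace_scale)
  have "0 \<le> (-2 * (norm r)^2) * t + (\<mu> * (norm r)^2 - inner r (T r)) * t^2" for t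
  proof -
    have "x + t *\<^sub>R r \<in> W" using W(1) x(1) \<open>r \<in> W\<close> by (intro subspace_add subspace_scale)
    then have "inner (x + t *\<^sub>R r) (T (x + t *\<^sub>R r)) \<le> \<mu> * (norm (x + t *\<^sub>R r))^2"
      unfolding \<mu>_def by (rule max)
    moreover have "inner (x + t *\<^sub>R r) (T (x + t *\<^sub>R r))
        = \<mu> + 2 * t * inner r (T x) + t^2 * inner r (T r)"
      using selfadjoint[of x r]
      by (simp add: \<mu>_def linear_add[OF T] linear_cmul[OF T] inner_add_left inner_add_right
          inner_commute power2_eq_square algebra_simps)
    moreover have "(norm (x + t *\<^sub>R r))^2 = 1 + 2 * t * inner r x + t^2 * (norm r)^2"
      using x(2) norm_eq_1[of x] unfolding power2_norm_eq_inner
      by (simp add: inner_add_left inner_add_right inner_commute algebra_simps power2_eq_square)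
    moreover have "inner r (T x) = (norm r)^2 + \<mu> * inner r x"
      by (simp add: r_def inner_diff_right power2_norm_eq_inner)
    ultimately show ?thesis by (simp add: algebra_simps)
  qed
  then have "-2 * (norm r)^2 = 0" by (rule quadratic_nonneg_imp_linear_coeff_zero)
  then show ?thesis by (simp add: r_def \<mu>_def)
qed

lemma selfadjoint_eigenvector_in_invariant_subspace:
  fixes T :: "'a::euclidean_space \<Rightarrow> 'a"
  assumes "linear T" "\<And>x y. inner x (T y) = inner (T x) y"
    and "subspace W" "W \<noteq> {0}" "T ` W \<subseteq> W"
  obtains x \<mu> where "x \<in> W" "norm x = 1" "T x = \<mu> *\<^sub>R x"
  using rayleigh_quotient_attains_max_on_subspace[OF assms(1,3,4)]
    selfadjoint_rayleigh_maximizer_is_eigenvector[OF assms(1,2,3,5)] by metis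

section \<open>Adjoints and unitary conjugation\<close>

lemma cmat_adj_mult: "cmat_adj (A ** B) = cmat_adj B ** cmat_adj (A::complex^'n^'n)"
  by (simp add: vec_eq_iff cmat_adj_def matrix_matrix_mult_def mult.commute)

lemma cmat_adj_cmat_adj [simp]: "cmat_adj (cmat_adj A) = A"
  by (simp add: vec_eq_iff cmat_adj_def)

lemma hermitian_add: "hermitian A \<Longrightarrow> hermitian B \<Longrightarrow> hermitian (A + B)"
  by (simp add: hermitian_def cmat_adj_def vec_eq_iff)

lemma unitary_right_inverse: "unitary U \<Longrightarrow> U ** cmat_adj U = mat 1"
  unfolding unitary_def using matrix_left_right_inverse by blast

lemma unitary_cmat_adj: "unitary U \<Longrightarrow> unitary (cmat_adj U)"
  by (simp add: unitary_def unitary_right_inverse)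

lemma unitary_mat_1: "unitary (mat 1)"
proof -
  have "cmat_adj (mat 1) = (mat 1 :: complex^'n^'n)"
    by (simp add: vec_eq_iff cmat_adj_def mat_def)
  then show ?thesis by (simp add: unitary_def matrix_mul_lid)
qed

lemma matrix_diff_ldistrib: "(C::'a::ring_1^'n^'n) ** (A - B) = C ** A - C ** B"
  by (simp add: vec_eq_iff matrix_matrix_mult_def sum_subtractf algebra_simps)

lemma matrix_diff_rdistrib: "(A - B) ** (C::'a::ring_1^'n^'n) = A ** C - B ** C"
  by (simp add: vec_eq_iff matrix_matrix_mult_def sum_subtractf algebra_simps)

lemma matrix_mult_rdiag_entry: "(U ** rdiag e)$i$k = U$i$k * complex_of_real (e$k)"
proof -
  have "(U ** rdiag e)$i$k = (\<Sum>j\<in>UNIV. U$i$j * (if j = k then complex_of_real (e$j) else 0))"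
    by (simp add: matrix_matrix_mult_def rdiag_def)
  also have "\<dots> = (\<Sum>j\<in>UNIV. if j = k then U$i$j * complex_of_real (e$j) else 0)"
    by (intro sum.cong) auto
  finally show ?thesis by simp
qed

lemma rdiag_conj_entry:
  "(U ** rdiag e ** W)$i$j = (\<Sum>k\<in>UNIV. U$i$k * complex_of_real (e$k) * W$k$j)"
  by (simp add: matrix_matrix_mult_def[of "U ** rdiag e"] matrix_mult_rdiag_entry)

lemma rdiag_conj_diff: "U ** rdiag a ** W - U ** rdiag b ** W = U ** rdiag (a - b) ** W"
  by (simp add: vec_eq_iff rdiag_conj_entry sum_subtractf[symmetric] algebra_simps)

lemma rdiag_conj_zero [simp]: "U ** rdiag 0 ** W = 0"
  by (simp add: vec_eq_iff rdiag_conj_entry)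

lemma rdiag_conj_diag_entry:
  "(U ** rdiag e ** cmat_adj U)$i$i = complex_of_real (\<Sum>k\<in>UNIV. e$k * (cmod (U$i$k))^2)"
proof -
  have "cnj z * z = complex_of_real ((cmod z)^2)" for z
    by (metis complex_norm_square mult.commute of_real_power)
  then show ?thesis by (simp add: rdiag_conj_entry cmat_adj_def algebra_simps)
qed

lemma trace_unitary_conj_rdiag:
  assumes "unitary U"
  shows "trace (U ** rdiag d ** cmat_adj U) = (\<Sum>i\<in>UNIV. complex_of_real (d$i))"
proof -
  have "trace (U ** rdiag d ** cmat_adj U) = trace (cmat_adj U ** U ** rdiag d)"
    by (simp add: trace_mul_sym[of "U ** rdiag d"] matrix_mul_assoc)
  also have "\<dots> = trace (rdiag d)"
    using assms by (simp add: unitary_def matrix_mul_lid)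
  finally show ?thesis by (simp add: trace_def rdiag_def)
qed

section \<open>The spectral theorem for Hermitian matrices\<close>

definition cinner :: "complex^'n \<Rightarrow> complex^'n \<Rightarrow> complex" where
  "cinner x y = (\<Sum>i\<in>UNIV. cnj (x$i) * y$i)"

lemma cinner_commute: "cinner y x = cnj (cinner x y)"
  by (simp add: cinner_def mult.commute)

lemma cinner_self: "cinner x x = complex_of_real ((norm x)^2)"
proof -
  have "cnj (x$i) * x$i = complex_of_real ((cmod (x$i))^2)" for i
    by (metis complex_norm_square mult.commute of_real_power)
  then show ?thesis by (simp add: cinner_def norm_vec_def L2_set_def sum_nonneg)
qed

lemma cinner_add_right: "cinner v (x + y) = cinner v x + cinner v y"
  by (simp add: cinner_def algebra_simps sum.distrib)

lemma cinner_scaleR_right: "cinner v (c *\<^sub>R x) = complex_of_real c * cinner v x"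
  by (simp add: cinner_def sum_distrib_left) (simp add: scaleR_conv_of_real algebra_simps)

lemma cinner_scale_left: "cinner (c *s v) x = cnj c * cinner v x"
  by (simp add: cinner_def sum_distrib_left algebra_simps)

lemma inner_eq_Re_cinner: "inner x y = Re (cinner x y)"
  by (simp add: inner_vec_def cinner_def inner_complex_def Re_sum)

lemma cinner_eq_0_iff: "cinner v x = 0 \<longleftrightarrow> inner v x = 0 \<and> inner (\<i> *s v) x = 0"
  by (simp add: inner_eq_Re_cinner cinner_scale_left complex_eq_iff)

lemma hermitian_cinner:
  assumes "hermitian A"
  shows "cinner x (A *v y) = cinner (A *v x) y"
proof -
  have A: "A$i$j = cnj (A$j$i)" for i j
    using assms unfolding hermitian_def cmat_adj_def by (metis vec_lambda_beta)
  have "cinner x (A *v y) = (\<Sum>i\<in>UNIV. \<Sum>j\<in>UNIV. cnj (x$i) * A$i$j * y$j)"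
    by (simp add: cinner_def matrix_vector_mult_def sum_distrib_left mult.assoc)
  also have "\<dots> = (\<Sum>j\<in>UNIV. \<Sum>i\<in>UNIV. cnj (A$j$i * x$i) * y$j)"
    by (subst sum.swap, subst A) (simp add: mult.commute)
  also have "\<dots> = cinner (A *v x) y"
    by (simp add: cinner_def matrix_vector_mult_def sum_distrib_right)
  finally show ?thesis .
qed

lemma exists_cinner_orthogonal_nonzero:
  fixes S :: "(complex^'n) set"
  assumes "finite S" "card S < CARD('n)"
  obtains z where "z \<noteq> 0" "\<And>v. v \<in> S \<Longrightarrow> cinner v z = 0"
proof -
  define R where "R = S \<union> (\<lambda>v. \<i> *s v) ` S"
  have "dim R \<le> card R" by (rule dim_le_card') (simp add: R_def assms(1))
  also have "\<dots> \<le> 2 * card S"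
    using card_Un_le[of S "(\<lambda>v. \<i> *s v) ` S"] card_image_le[OF assms(1), of "\<lambda>v. \<i> *s v"]
    unfolding R_def by linarith
  also have "\<dots> < DIM(complex^'n)" using assms(2) by (simp add: DIM_cart)
  finally obtain z where z: "z \<noteq> 0" "\<And>y. y \<in> span R \<Longrightarrow> orthogonal z y"
    using orthogonal_to_subspace_exists by blast
  have "cinner v z = 0" if "v \<in> S" for v
    using z(2)[of v] z(2)[of "\<i> *s v"] that
    by (simp add: R_def span_base cinner_eq_0_iff orthogonal_def inner_commute)
  with z(1) show ?thesis using that by blast
qed

lemma hermitian_eigenvector_cinner_orthogonal:
  fixes A :: "complex^'n^'n"
  assumes herm: "hermitian A" and S: "finite S" "card S < CARD('n)"
    and eigen: "\<And>v. v \<in> S \<Longrightarrow> \<exists>\<mu>. A *v v = \<mu> *\<^sub>R v"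
  obtains x \<mu> where "norm x = 1" "A *v x = \<mu> *\<^sub>R x" "\<And>v. v \<in> S \<Longrightarrow> cinner v x = 0"
proof -
  define W where "W = {x. \<forall>v\<in>S. cinner v x = 0}"
  have lin: "linear ((*v) A)"
    by (rule bounded_linear.linear[OF matrix_vector_mul_bounded_linear])
  have selfadjoint: "inner x (A *v y) = inner (A *v x) y" for x y
    by (simp add: inner_eq_Re_cinner hermitian_cinner[OF herm])
  have sub: "subspace W"
    by (auto simp: W_def subspace_def cinner_add_right cinner_scaleR_right) (simp add: cinner_def)
  obtain z where "z \<noteq> 0" "\<And>v. v \<in> S \<Longrightarrow> cinner v z = 0"
    using exists_cinner_orthogonal_nonzero[OF S] by blast
  then have nontrivial: "W \<noteq> {0}" unfolding W_def by blast
  have invariant: "(*v) A ` W \<subseteq> W"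
  proof (clarsimp simp: W_def)
    fix x v assume "\<forall>v\<in>S. cinner v x = 0" "v \<in> S"
    moreover obtain \<mu> where "A *v v = \<mu> *\<^sub>R v" using eigen \<open>v \<in> S\<close> by blast
    ultimately have "cinner x (A *v v) = 0"
      by (metis cinner_scaleR_right cinner_commute complex_cnj_zero mult_zero_right)
    then show "cinner v (A *v x) = 0"
      using hermitian_cinner[OF herm, of v x] cinner_commute[of "A *v v" x] by simp
  qed
  obtain x \<mu> where x: "x \<in> W" "norm x = 1" "A *v x = \<mu> *\<^sub>R x"
    by (rule selfadjoint_eigenvector_in_invariant_subspace[OF lin selfadjoint sub nontrivial invariant])
  show ?thesis by (rule that[of x \<mu>]) (use x in \<open>auto simp: W_def\<close>)
qed

lemma hermitian_orthonormal_eigenvectors: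
  fixes A :: "complex^'n^'n"
  assumes herm: "hermitian A" and "k \<le> CARD('n)"
  obtains S where "finite S" "card S = k" "\<And>v. v \<in> S \<Longrightarrow> norm v = 1 \<and> (\<exists>\<mu>. A *v v = \<mu> *\<^sub>R v)"
    "pairwise (\<lambda>u v. cinner u v = 0) S"
  using assms(2)
proof (induction k arbitrary: thesis)
  case 0
  then show ?case by (metis card.empty empty_iff finite.emptyI pairwise_empty)
next
  case (Suc k)
  then obtain S where S: "finite S" "card S = k" "\<And>v. v \<in> S \<Longrightarrow> norm v = 1 \<and> (\<exists>\<mu>. A *v v = \<mu> *\<^sub>R v)"
    "pairwise (\<lambda>u v. cinner u v = 0) S" by (metis Suc_leD)
  obtain x \<mu> where x: "norm x = 1" "A *v x = \<mu> *\<^sub>R x" "\<And>v. v \<in> S \<Longrightarrow> cinner v x = 0"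
    using hermitian_eigenvector_cinner_orthogonal[OF herm S(1)] S(2,3) Suc.prems(2) by auto
  have "x \<notin> S" using x(1,3) cinner_self[of x] by force
  moreover have "pairwise (\<lambda>u v. cinner u v = 0) (insert x S)"
    using S(4) x(3) cinner_commute[of x] by (auto simp: pairwise_insert)
  ultimately show ?case
    using Suc.prems(1)[of "insert x S"] S x by auto
qed

lemma hermitian_spectral_decomposition:
  fixes A :: "complex^'n^'n"
  assumes "hermitian A"
  obtains U d where "unitary U" "A = U ** rdiag d ** cmat_adj U"
proof -
  obtain S where S: "finite S" "card S = CARD('n)"
    "\<And>v. v \<in> S \<Longrightarrow> norm v = 1 \<and> (\<exists>\<mu>. A *v v = \<mu> *\<^sub>R v)" "pairwise (\<lambda>u v. cinner u v = 0) S"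
    using hermitian_orthonormal_eigenvectors[OF assms order_refl] by blast
  obtain h :: "'n \<Rightarrow> complex^'n" where h: "bij_betw h UNIV S"
    using finite_same_card_bij[of "UNIV :: 'n set" S] S(1,2) by auto
  then have hS: "h j \<in> S" for j by (auto dest: bij_betw_apply)
  obtain f where f: "\<And>j. A *v h j = f j *\<^sub>R h j"
    using S(3)[OF hS] by metis
  define U where "U = (\<chi> i j. h j $ i)"
  have "cmat_adj U ** U = mat 1"
  proof -
    have "cinner (h j) (h k) = (if j = k then 1 else 0)" for j k
    proof (cases "j = k")
      case True
      then show ?thesis using S(3)[OF hS] by (simp add: cinner_self)
    next
      case False
      then have "h j \<noteq> h k" using bij_betw_imp_inj_on[OF h] by (auto dest: inj_onD)
      then show ?thesis using S(4) hS False by (auto simp: pairwise_def)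
    qed
    then show ?thesis
      by (simp add: vec_eq_iff mat_def matrix_matrix_mult_def cmat_adj_def U_def cinner_def)
  qed
  then have "unitary U" by (simp add: unitary_def)
  have "A ** U = U ** rdiag (\<chi> j. f j)"
  proof -
    have "(A ** U)$i$j = (A *v h j)$i" for i j
      by (simp add: matrix_matrix_mult_def matrix_vector_mult_def U_def)
    then show ?thesis
      by (simp add: vec_eq_iff matrix_mult_rdiag_entry f U_def) (simp add: scaleR_conv_of_real mult.commute)
  qed
  then have "A = U ** rdiag (\<chi> j. f j) ** cmat_adj U"
    by (metis matrix_mul_assoc matrix_mul_rid unitary_right_inverse[OF \<open>unitary U\<close>])
  with \<open>unitary U\<close> show ?thesis by (rule that)
qed

lemma trace_matfun:
  assumes "hermitian A"
  obtains U d where "unitary U" "A = U ** rdiag d ** cmat_adj U"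
    "trace (matfun f A) = (\<Sum>i\<in>UNIV. complex_of_real (f (d$i)))"
proof -
  have "\<exists>U d. unitary U \<and> A = U ** rdiag d ** cmat_adj U \<and>
      matfun f A = U ** rdiag (\<chi> i. f (d$i)) ** cmat_adj U"
    unfolding matfun_def
    by (rule someI_ex) (use hermitian_spectral_decomposition[OF assms] in blast)
  then show ?thesis using that trace_unitary_conj_rdiag by fastforce
qed

section \<open>The Frobenius norm\<close>

lemma norm_sq_matrix: "(norm (A::complex^'n^'n))^2 = (\<Sum>i\<in>UNIV. \<Sum>j\<in>UNIV. (cmod (A$i$j))^2)"
  by (simp add: norm_vec_def L2_set_def sum_nonneg)

lemma frob_eq_norm: "frob A = norm A"
  by (simp add: frob_def norm_sq_matrix[symmetric])

lemma norm_sq_eq_trace: "(norm (A::complex^'n^'n))^2 = Re (trace (cmat_adj A ** A))"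
proof -
  have "cnj z * z = complex_of_real ((cmod z)^2)" for z
    by (metis complex_norm_square mult.commute of_real_power)
  then have "Re (trace (cmat_adj A ** A)) = (\<Sum>j\<in>UNIV. \<Sum>i\<in>UNIV. (cmod (A$i$j))^2)"
    by (simp add: trace_def matrix_matrix_mult_def cmat_adj_def Re_sum)
  also have "\<dots> = (\<Sum>i\<in>UNIV. \<Sum>j\<in>UNIV. (cmod (A$i$j))^2)"
    by (rule sum.swap)
  finally show ?thesis by (simp add: norm_sq_matrix)
qed

lemma norm_unitary_conj:
  assumes "unitary V"
  shows "norm (cmat_adj V ** B ** V) = norm B"
proof -
  note VV = unitary_right_inverse[OF assms]
  have "cmat_adj (cmat_adj V ** B ** V) ** (cmat_adj V ** B ** V)
      = cmat_adj V ** (cmat_adj B ** ((V ** cmat_adj V) ** B)) ** V"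
    by (simp add: cmat_adj_mult matrix_mul_assoc)
  also have "\<dots> = cmat_adj V ** (cmat_adj B ** B) ** V"
    by (simp add: VV matrix_mul_lid)
  finally have "(norm (cmat_adj V ** B ** V))^2 = Re (trace (cmat_adj V ** (cmat_adj B ** B) ** V))"
    by (simp add: norm_sq_eq_trace)
  also have "\<dots> = Re (trace (V ** (cmat_adj V ** (cmat_adj B ** B))))"
    by (metis trace_mul_sym)
  also have "\<dots> = (norm B)^2"
    by (simp add: norm_sq_eq_trace matrix_mul_assoc VV matrix_mul_lid)
  finally show ?thesis by (simp add: power2_eq_iff_nonneg)
qed

lemma norm_unitary_conj_adj: "unitary U \<Longrightarrow> norm (U ** B ** cmat_adj U) = norm B"
  using norm_unitary_conj[OF unitary_cmat_adj] by fastforce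

lemma norm_sq_rdiag: "(norm (rdiag e))^2 = (\<Sum>i\<in>UNIV. (e$i)^2)"
proof -
  have "(\<Sum>j\<in>UNIV. (cmod (rdiag e $ i $ j))^2) = (e$i)^2" for i
  proof -
    have "(\<Sum>j\<in>UNIV. (cmod (rdiag e $ i $ j))^2) = (\<Sum>j\<in>UNIV. if i = j then (e$i)^2 else 0)"
      by (intro sum.cong) (auto simp: rdiag_def)
    then show ?thesis by simp
  qed
  then show ?thesis by (simp add: norm_sq_matrix)
qed

lemma diag_sq_le_norm_sq: "(\<Sum>i\<in>UNIV. (cmod (A$i$i))^2) \<le> (norm (A::complex^'n^'n))^2"
  unfolding norm_sq_matrix by (intro sum_mono member_le_sum) auto

section \<open>Distance to the positive semidefinite cone\<close>

lemma zeta_le_sq_diff: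
  assumes "0 \<le> y"
  shows "zeta d \<le> (d - y)^2"
proof (cases "d \<le> 0")
  case True
  then have "0 \<le> y * (y - 2 * d)" using assms by (intro mult_nonneg_nonneg) auto
  then show ?thesis using True by (simp add: zeta_def power2_eq_square algebra_simps)
next
  case False
  then show ?thesis by (simp add: zeta_def)
qed

lemma zeta_eq_sq_diff_max: "zeta d = (d - max d 0)^2"
  by (simp add: zeta_def max_def)

definition psd_matrices :: "(complex^'n^'n) set" where
  "psd_matrices = {U ** rdiag e ** cmat_adj U | U e. unitary U \<and> (\<forall>k. 0 \<le> e$k)}"

lemma rdiag_conj_in_psd_matrices:
  "unitary U \<Longrightarrow> (\<And>k. 0 \<le> e$k) \<Longrightarrow> U ** rdiag e ** cmat_adj U \<in> psd_matrices"
  by (auto simp: psd_matrices_def)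

lemma zero_in_psd_matrices: "0 \<in> psd_matrices"
proof -
  have "mat 1 ** rdiag 0 ** cmat_adj (mat 1) \<in> psd_matrices"
    by (rule rdiag_conj_in_psd_matrices[OF unitary_mat_1]) simp
  then show ?thesis by (simp only: rdiag_conj_zero)
qed

lemma sum_zeta_le_dist_sq_psd:
  assumes V: "unitary V" and X: "X \<in> psd_matrices"
  shows "(\<Sum>i\<in>UNIV. zeta (d$i)) \<le> (dist (V ** rdiag d ** cmat_adj V) X)^2"
proof -
  obtain U e where U: "unitary U" "X = U ** rdiag e ** cmat_adj U" and e: "\<And>k. 0 \<le> e$k"
    using X by (auto simp: psd_matrices_def)
  define W where "W = cmat_adj V ** U"
  have VV: "cmat_adj V ** V = mat 1" using V by (simp add: unitary_def)
  define M where "M = cmat_adj V ** (V ** rdiag d ** cmat_adj V - X) ** V"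
  have "cmat_adj V ** (V ** rdiag d ** cmat_adj V) ** V = rdiag d"
    by (simp add: matrix_mul_assoc VV matrix_mul_lid) (simp add: matrix_mul_assoc[symmetric] VV matrix_mul_rid)
  moreover have "cmat_adj V ** (U ** rdiag e ** cmat_adj U) ** V = W ** rdiag e ** cmat_adj W"
    by (simp add: W_def cmat_adj_mult matrix_mul_assoc)
  ultimately have M_eq: "M = rdiag d - W ** rdiag e ** cmat_adj W"
    unfolding M_def U(2) matrix_diff_ldistrib matrix_diff_rdistrib by simp
  have "zeta (d$i) \<le> (cmod (M$i$i))^2" for i
  proof -
    define y where "y = (\<Sum>k\<in>UNIV. e$k * (cmod (W$i$k))^2)"
    have "0 \<le> y" unfolding y_def using e by (intro sum_nonneg) auto
    moreover have "M$i$i = complex_of_real (d$i - y)"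
      by (simp add: M_eq rdiag_conj_diag_entry y_def) (simp add: rdiag_def)
    ultimately show ?thesis by (simp add: zeta_le_sq_diff del: of_real_diff)
  qed
  then have "(\<Sum>i\<in>UNIV. zeta (d$i)) \<le> (\<Sum>i\<in>UNIV. (cmod (M$i$i))^2)" by (rule sum_mono)
  also have "\<dots> \<le> (norm M)^2" by (rule diag_sq_le_norm_sq)
  also have "norm M = dist (V ** rdiag d ** cmat_adj V) X"
    by (simp add: M_def norm_unitary_conj[OF V] dist_norm)
  finally show ?thesis .
qed

lemma infdist_psd_matrices_sq:
  fixes U :: "complex^'n^'n"
  assumes U: "unitary U"
  shows "(infdist (U ** rdiag d ** cmat_adj U) psd_matrices)^2 = (\<Sum>i\<in>UNIV. zeta (d$i))"
proof -
  define A where "A = U ** rdiag d ** cmat_adj U"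
  define X where "X = U ** rdiag (\<chi> i. max (d$i) 0) ** cmat_adj U"
  have "X \<in> psd_matrices" unfolding X_def using U by (rule rdiag_conj_in_psd_matrices) simp
  have "(dist A X)^2 = (\<Sum>i\<in>UNIV. zeta (d$i))"
    by (simp add: A_def X_def dist_norm rdiag_conj_diff norm_unitary_conj_adj[OF U] norm_sq_rdiag
        zeta_eq_sq_diff_max)
  moreover have "infdist A psd_matrices = dist A X"
  proof (rule antisym)
    show "infdist A psd_matrices \<le> dist A X" using \<open>X \<in> psd_matrices\<close> by (rule infdist_le)
    have "dist A X \<le> dist A Y" if "Y \<in> psd_matrices" for Y
    proof (rule power2_le_imp_le)
      show "(dist A X)^2 \<le> (dist A Y)^2"
        using sum_zeta_le_dist_sq_psd[OF U that, of d] \<open>(dist A X)^2 = _\<close> by (simp add: A_def)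
    qed simp
    moreover have "(psd_matrices :: (complex^'n^'n) set) \<noteq> {}"
      using \<open>X \<in> psd_matrices\<close> by blast
    ultimately show "dist A X \<le> infdist A psd_matrices"
      by (simp add: infdist_notempty cINF_greatest)
  qed
  ultimately show ?thesis by (simp add: A_def)
qed

lemma trace_matfun_zeta:
  assumes "hermitian A"
  shows "trace (matfun zeta A) = complex_of_real ((infdist A psd_matrices)^2)"
proof -
  obtain U d where "unitary U" "A = U ** rdiag d ** cmat_adj U"
    and "trace (matfun zeta A) = (\<Sum>i\<in>UNIV. complex_of_real (zeta (d$i)))"
    using trace_matfun[OF assms] .
  then show ?thesis by (simp add: infdist_psd_matrices_sq)
qed

lemma abs_diff_squares_le:
  fixes a b p q :: real
  assumes "0 \<le> a" "0 \<le> b" "\<bar>b - a\<bar> \<le> q" "a \<le> p"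
  shows "\<bar>b^2 - a^2\<bar> \<le> 2 * (p * q + q^2)"
proof -
  have "b^2 - a^2 = (b - a) * (b + a)" by (simp add: power2_eq_square algebra_simps)
  then have "\<bar>b^2 - a^2\<bar> = \<bar>b - a\<bar> * (b + a)" using assms(1,2) by (simp add: abs_mult)
  also have "\<dots> \<le> q * (2 * p + q)"
    using assms by (intro mult_mono) auto
  also have "\<dots> \<le> 2 * (p * q + q^2)"
    by (simp add: power2_eq_square algebra_simps)
  finally show ?thesis .
qed

theorem lemma10p4:
  fixes P Q :: "complex^'n^'n"
  assumes "hermitian P" and "hermitian Q"
  shows "cmod (trace (matfun zeta (P + Q) - matfun zeta P))
           \<le> 2 * (frob P * frob Q + (frob Q)^2)"
proof -
  define a where "a = infdist P psd_matrices"
  define b where "b = infdist (P + Q) psd_matrices"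
  have trace_eq: "trace (matfun zeta (P + Q) - matfun zeta P) = complex_of_real (b^2 - a^2)"
    using assms by (simp add: trace_sub trace_matfun_zeta hermitian_add a_def b_def)
  have "\<bar>b - a\<bar> \<le> norm Q"
    using infdist_triangle_abs[of "P + Q" psd_matrices P] by (simp add: a_def b_def dist_norm)
  moreover have "a \<le> norm P"
    using infdist_le[OF zero_in_psd_matrices, of P] by (simp add: a_def dist_norm)
  ultimately have "\<bar>b^2 - a^2\<bar> \<le> 2 * (norm P * norm Q + (norm Q)^2)"
    by (intro abs_diff_squares_le) (auto simp: a_def b_def infdist_nonneg)
  then show ?thesis unfolding trace_eq norm_of_real frob_eq_norm .
qed

end
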